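(* Let $r\ge 1$ and let $M$ be a finite list of nonzero vectors generating $\mathbb{F}_2^r$, in which each $u\in\mathbb{F}_2^r\setminus\{0\}$ appears with multiplicity $a_u\ge 0$. Assume the $a_u$ ($u\neq 0$) are not all of the same parity. Let $M'$ be the list in which each $u\in\mathbb{F}_2^r\setminus\{0\}$ appears with multiplicity $a_u+1$. Then $d(M)=d(M')$.
   Context: For a finite list $M=(v_1,\dots,v_n)$ of nonzero vectors generating $\mathbb{F}_2^r$, the Cayley graph $G(\mathbb{F}_2^r,M)$ has Laplacian $L$ indexed by $\mathbb{F}_2^r$ with $L_{u,u}=n$ and $L_{u,w}=-\#\{i:u+v_i=w\}$ for $u\ne w$; $\operatorname{coker}L\cong\mathbb{Z}\oplus K(G)$ with $K(G)$ finite abelian (the sandpile group). $d(M)$ denotes the number of even-order cyclic factors in the invariant factor decomposition of $K(G(\mathbb{F}_2^r,M))$, i.e. $d(M)=\dim_{\mathbb{F}_2}K(G)\otimes\mathbb{Z}/2\mathbb{Z}$. *)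

theory Defs
  imports Main
begin

text \<open>Vectors of F_2^r are modelled as functions nat => bool with support in {0..<r};
  addition is pointwise exclusive or.\<close>

definition F2vecs :: "nat \<Rightarrow> (nat \<Rightarrow> bool) set" where
  "F2vecs r = {v. \<forall>i. r \<le> i \<longrightarrow> \<not> v i}"

definition F2zero :: "nat \<Rightarrow> bool" where
  "F2zero = (\<lambda>_. False)"

definition F2add :: "(nat \<Rightarrow> bool) \<Rightarrow> (nat \<Rightarrow> bool) \<Rightarrow> (nat \<Rightarrow> bool)" where
  "F2add u v = (\<lambda>i. u i \<noteq> v i)"

definition F2comb :: "(nat \<Rightarrow> bool) list \<Rightarrow> nat set \<Rightarrow> (nat \<Rightarrow> bool)" where
  "F2comb M S = (\<lambda>j. odd (card {i \<in> S. (M ! i) j}))"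

definition generates :: "nat \<Rightarrow> (nat \<Rightarrow> bool) list \<Rightarrow> bool" where
  "generates r M \<longleftrightarrow> (\<forall>w \<in> F2vecs r. \<exists>S \<subseteq> {..<length M}. w = F2comb M S)"

definition cayley_laplacian :: "(nat \<Rightarrow> bool) list \<Rightarrow> (nat \<Rightarrow> bool) \<Rightarrow> (nat \<Rightarrow> bool) \<Rightarrow> int" where
  "cayley_laplacian M u w =
     (if u = w then int (length M)
      else - int (card {i. i < length M \<and> F2add u (M ! i) = w}))"

text \<open>The lattice Z^V (integer vectors indexed by V = F_2^r, zero outside V).\<close>
definition int_vecs :: "nat \<Rightarrow> ((nat \<Rightarrow> bool) \<Rightarrow> int) set" where
  "int_vecs r = {x. \<forall>u. u \<notin> F2vecs r \<longrightarrow> x u = 0}"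

definition lap_apply :: "nat \<Rightarrow> (nat \<Rightarrow> bool) list \<Rightarrow> ((nat \<Rightarrow> bool) \<Rightarrow> int) \<Rightarrow> ((nat \<Rightarrow> bool) \<Rightarrow> int)" where
  "lap_apply r M x = (\<lambda>u. if u \<in> F2vecs r then (\<Sum>w\<in>F2vecs r. cayley_laplacian M u w * x w) else 0)"

text \<open>Image of L in Z^V (so that coker L = Z^V / lap_image).\<close>
definition lap_image :: "nat \<Rightarrow> (nat \<Rightarrow> bool) list \<Rightarrow> ((nat \<Rightarrow> bool) \<Rightarrow> int) set" where
  "lap_image r M = lap_apply r M ` int_vecs r"

text \<open>Preimage in Z^V of the torsion subgroup K(G) of coker L.\<close>
definition torsion_preimage :: "nat \<Rightarrow> (nat \<Rightarrow> bool) list \<Rightarrow> ((nat \<Rightarrow> bool) \<Rightarrow> int) set" where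
  "torsion_preimage r M = {x \<in> int_vecs r. \<exists>k::int. k > 0 \<and> (\<lambda>u. k * x u) \<in> lap_image r M}"

text \<open>K(G) tensor Z/2 = K / 2K = T / (2T + im L) where T is the torsion preimage.\<close>
definition sandpile_mod2 :: "nat \<Rightarrow> (nat \<Rightarrow> bool) list \<Rightarrow> ((nat \<Rightarrow> bool) \<Rightarrow> int) set set" where
  "sandpile_mod2 r M =
     torsion_preimage r M //
       {(x, y). x \<in> torsion_preimage r M \<and> y \<in> torsion_preimage r M \<and>
          (\<exists>t \<in> torsion_preimage r M. \<exists>l \<in> lap_image r M. (\<lambda>u. x u - y u) = (\<lambda>u. 2 * t u + l u))}"

text \<open>d(M) = dim_{F_2} (K(G) tensor Z/2), i.e. the d with |K/2K| = 2^d.\<close>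
definition d_inv :: "nat \<Rightarrow> (nat \<Rightarrow> bool) list \<Rightarrow> nat" where
  "d_inv r M = (THE d. card (sandpile_mod2 r M) = 2 ^ d)"

end

theory Submission
  imports Defs
begin

text \<open>Every character \<open>\<chi>\<^sub>s\<close> of \<open>F\<^sub>2\<^sup>r\<close> is an eigenvector of the Laplacian \<open>L\<^sub>M\<close>, with eigenvalue
  \<open>2 \<Sum>{a\<^sub>v | \<chi>\<^sub>s(v) = -1}\<close>; this is positive for \<open>s \<noteq> 0\<close> as soon as \<open>M\<close> generates \<open>F\<^sub>2\<^sup>r\<close>.
  Hence for both \<open>M\<close> and \<open>M'\<close> the preimage \<open>T\<close> of the sandpile group in \<open>\<int>\<^sup>V\<close> is the lattice of
  vectors with coordinate sum zero, and \<open>K \<otimes> \<int>/2 = T / (2T + im L)\<close>.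
  Raising every multiplicity by one adds the Laplacian \<open>N I - J\<close> of the complete graph,
  \<open>N = 2\<^sup>r\<close>, so \<open>L\<^sub>M' y - L\<^sub>M y = N y - (\<Sum>y) \<one>\<close>. Here \<open>N y\<close> is even, and the all-ones vector
  \<open>\<one>\<close> is congruent mod 2 to a vector of \<open>im L\<^sub>M\<close> (some \<open>a\<^sub>w\<close> is odd) and to one of \<open>im L\<^sub>M'\<close>
  (some \<open>a\<^sub>u + 1\<close> is odd). Thus \<open>2T + im L\<^sub>M = 2T + im L\<^sub>M'\<close>, and the two quotients coincide.\<close>

section \<open>The group \<open>F\<^sub>2\<^sup>r\<close>\<close>

lemma F2add_self [simp]: "F2add u u = F2zero"
  by (simp add: F2add_def F2zero_def)

lemma F2add_commute: "F2add u w = F2add w u"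
  by (auto simp: F2add_def)

lemma F2add_cancel [simp]: "F2add u (F2add u w) = w"
  by (auto simp: F2add_def)

lemma F2add_eq_zero_iff: "F2add u w = F2zero \<longleftrightarrow> u = w"
  by (auto simp: F2add_def F2zero_def fun_eq_iff)

lemma F2add_in_F2vecs [intro]: "u \<in> F2vecs r \<Longrightarrow> w \<in> F2vecs r \<Longrightarrow> F2add u w \<in> F2vecs r"
  by (auto simp: F2add_def F2vecs_def)

lemma F2zero_in_F2vecs [simp]: "F2zero \<in> F2vecs r"
  by (simp add: F2zero_def F2vecs_def)

lemma F2vecs_0: "F2vecs 0 = {F2zero}"
  by (auto simp: F2vecs_def F2zero_def)

lemma finite_F2vecs [simp]: "finite (F2vecs r)"
proof (rule finite_subset)
  show "F2vecs r \<subseteq> (\<lambda>S i. i \<in> S) ` Pow {..<r}"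
  proof
    fix v assume "v \<in> F2vecs r"
    then have "{i. v i} \<in> Pow {..<r}" and "v = (\<lambda>i. i \<in> {i. v i})"
      by (auto simp: F2vecs_def not_le[symmetric])
    then show "v \<in> (\<lambda>S i. i \<in> S) ` Pow {..<r}" by blast
  qed
qed simp

lemma sum_F2vecs_translate:
  assumes "u \<in> F2vecs r"
  shows "(\<Sum>w\<in>F2vecs r. g (F2add u w)) = (\<Sum>w\<in>F2vecs r. g w)"
proof (rule sum.reindex_bij_betw)
  show "bij_betw (F2add u) (F2vecs r) (F2vecs r)"
    by (rule bij_betw_byWitness[where f' = "F2add u"]) (use assms in auto)
qed

lemma F2vecs_Suc: "F2vecs (Suc r) = F2vecs r \<union> (\<lambda>w. w(r := True)) ` F2vecs r"
proof (intro equalityI subsetI)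
  fix v assume v: "v \<in> F2vecs (Suc r)"
  show "v \<in> F2vecs r \<union> (\<lambda>w. w(r := True)) ` F2vecs r"
  proof (cases "v r")
    case True
    then have "v = (v(r := False))(r := True)" and "v(r := False) \<in> F2vecs r"
      using v by (auto simp: F2vecs_def fun_eq_iff le_Suc_eq)
    then show ?thesis by blast
  next
    case False
    then have "v \<in> F2vecs r"
      using v by (auto simp: F2vecs_def) (metis le_antisym not_less_eq_eq)
    then show ?thesis by blast
  qed
qed (auto simp: F2vecs_def)

lemma ball_F2vecs_Suc:
  "(\<forall>u\<in>F2vecs (Suc r). Q u) \<longleftrightarrow> (\<forall>u\<in>F2vecs r. Q u \<and> Q (u(r := True)))"
  by (auto simp: F2vecs_Suc)

lemma sum_Un_image_upd:
  assumes "K \<subseteq> F2vecs r"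
  shows "(\<Sum>w\<in>K \<union> (\<lambda>w. w(r := True)) ` K. g w) = (\<Sum>k\<in>K. g k + g (k(r := True)))"
proof -
  have K_r: "\<not> k r" if "k \<in> K" for k
    using that assms by (auto simp: F2vecs_def)
  have "K \<inter> (\<lambda>w. w(r := True)) ` K = {}"
    using K_r by fastforce
  moreover have "inj_on (\<lambda>w. w(r := True)) K"
  proof (rule inj_onI)
    fix v w assume "v \<in> K" "w \<in> K" "v(r := True) = w(r := True)"
    then have "v(r := False) = w(r := False)" by (metis fun_upd_upd)
    moreover have "v = v(r := False)" "w = w(r := False)"
      using K_r \<open>v \<in> K\<close> \<open>w \<in> K\<close> by (auto simp: fun_eq_iff)
    ultimately show "v = w" by simp
  qed
  moreover have "finite K" using assms finite_subset[OF _ finite_F2vecs] by blast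
  ultimately show ?thesis
    by (simp add: sum.union_disjoint sum.reindex sum.distrib)
qed

lemma even_card_F2vecs:
  assumes "r \<ge> 1"
  shows "even (card (F2vecs r))"
proof -
  obtain q where r: "r = Suc q" using assms by (cases r) auto
  have "card (F2vecs (Suc q)) = (\<Sum>k\<in>F2vecs q. 1 + 1)"
    using sum_Un_image_upd[of "F2vecs q" q "\<lambda>_. 1::nat"] by (simp add: F2vecs_Suc)
  then show ?thesis unfolding r by simp
qed

lemma F2add_upd:
  assumes "u \<in> F2vecs r" "w \<in> F2vecs r"
  shows "F2add u (w(r := True)) = (F2add u w)(r := True)"
    and "F2add (u(r := True)) w = (F2add u w)(r := True)"
    and "F2add (u(r := True)) (w(r := True)) = F2add u w"
  using assms by (auto simp: F2add_def F2vecs_def fun_eq_iff)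

section \<open>Characters\<close>

definition F2char :: "nat \<Rightarrow> (nat \<Rightarrow> bool) \<Rightarrow> (nat \<Rightarrow> bool) \<Rightarrow> int" where
  "F2char r s u = (\<Prod>i<r. if s i \<and> u i then -1 else 1)"

lemma F2char_F2add: "F2char r s (F2add u w) = F2char r s u * F2char r s w"
  unfolding F2char_def prod.distrib[symmetric] by (rule prod.cong) (auto simp: F2add_def)

lemma F2char_commute: "F2char r s u = F2char r u s"
  unfolding F2char_def by (rule prod.cong) auto

lemma F2char_cases: "F2char r s u = 1 \<or> F2char r s u = -1"
proof -
  have "F2char r s u * F2char r s u = 1"
    unfolding F2char_def prod.distrib[symmetric] by (rule prod.neutral) auto
  then show ?thesis by (simp add: zmult_eq_1_iff)
qed

lemma F2char_F2zero [simp]: "F2char r F2zero u = 1"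
  by (simp add: F2char_def F2zero_def)

lemma exists_F2char_eq_neg:
  assumes "s \<in> F2vecs r" "s \<noteq> F2zero"
  shows "\<exists>e\<in>F2vecs r - {F2zero}. F2char r s e = -1"
proof -
  obtain j where j: "s j" using assms(2) by (auto simp: F2zero_def fun_eq_iff)
  then have "j < r" using assms(1) by (auto simp: F2vecs_def not_less[symmetric])
  define e where "e = (\<lambda>i::nat. i = j)"
  have "e \<in> F2vecs r - {F2zero}"
    using \<open>j < r\<close> by (auto simp: e_def F2vecs_def F2zero_def fun_eq_iff)
  moreover have "F2char r s e = (\<Prod>i<r. if i = j then -1 else 1)"
    unfolding F2char_def e_def by (rule prod.cong) (auto simp: j)
  ultimately show ?thesis using \<open>j < r\<close> by (auto simp: prod.delta)
qed

lemma sum_F2char: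
  assumes "s \<in> F2vecs r"
  shows "(\<Sum>u\<in>F2vecs r. F2char r s u) = (if s = F2zero then int (card (F2vecs r)) else 0)"
proof (cases "s = F2zero")
  case False
  then obtain e where e: "e \<in> F2vecs r" "F2char r s e = -1"
    using exists_F2char_eq_neg[OF assms] by blast
  have "(\<Sum>u\<in>F2vecs r. F2char r s u) = (\<Sum>u\<in>F2vecs r. F2char r s (F2add e u))"
    using sum_F2vecs_translate[OF e(1), of "F2char r s"] by simp
  also have "\<dots> = - (\<Sum>u\<in>F2vecs r. F2char r s u)"
    by (simp add: F2char_F2add e(2) sum_negf)
  finally show ?thesis using False by simp
qed simp

lemma F2char_inversion:
  assumes "u \<in> F2vecs r"
  shows "(\<Sum>s\<in>F2vecs r. (\<Sum>w\<in>F2vecs r. x w * F2char r s w) * F2char r s u)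
    = int (card (F2vecs r)) * x u"
proof -
  have "F2char r (F2add w u) s = F2char r s w * F2char r s u" for w s
    by (subst F2char_commute) (rule F2char_F2add)
  then have "(\<Sum>s\<in>F2vecs r. (\<Sum>w\<in>F2vecs r. x w * F2char r s w) * F2char r s u)
      = (\<Sum>s\<in>F2vecs r. \<Sum>w\<in>F2vecs r. x w * F2char r (F2add w u) s)"
    by (simp add: sum_distrib_right mult.assoc)
  also have "\<dots> = (\<Sum>w\<in>F2vecs r. x w * (\<Sum>s\<in>F2vecs r. F2char r (F2add w u) s))"
    by (subst sum.swap) (simp add: sum_distrib_left)
  also have "\<dots> = (\<Sum>w\<in>F2vecs r. if w = u then int (card (F2vecs r)) * x u else 0)"
    by (rule sum.cong) (auto simp: sum_F2char F2add_in_F2vecs assms F2add_eq_zero_iff)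
  also have "\<dots> = int (card (F2vecs r)) * x u"
    using assms by (simp add: sum.delta')
  finally show ?thesis .
qed

lemma F2char_F2comb:
  assumes "finite S"
  shows "F2char r s (F2comb M S) = (\<Prod>i\<in>S. F2char r s (M ! i))"
proof -
  have parity: "(\<Prod>i\<in>S. if s j \<and> (M ! i) j then -1 else 1)
      = (if s j \<and> F2comb M S j then -1 else (1::int))" for j
  proof -
    have "(\<Prod>i\<in>S. if s j \<and> (M ! i) j then -1 else 1)
        = (\<Prod>i\<in>{i \<in> S. (M ! i) j}. if s j then -1 else (1::int))"
      using assms by (simp add: prod.inter_filter[symmetric] if_distrib cong: if_cong)
    then show ?thesis
      by (simp add: F2comb_def)
  qed
  have "(\<Prod>i\<in>S. F2char r s (M ! i)) = (\<Prod>j<r. \<Prod>i\<in>S. if s j \<and> (M ! i) j then -1 else 1)"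
    unfolding F2char_def by (rule prod.swap)
  then show ?thesis
    by (simp add: parity F2char_def)
qed

lemma generates_imp_F2char_neg:
  assumes "generates r M" "s \<in> F2vecs r - {F2zero}"
  shows "\<exists>v\<in>set M. F2char r s v = -1"
proof (rule ccontr)
  assume "\<not> ?thesis"
  then have pos: "F2char r s v = 1" if "v \<in> set M" for v
    using that F2char_cases[of r s v] by blast
  obtain e where e: "e \<in> F2vecs r" "F2char r s e = -1"
    using exists_F2char_eq_neg assms(2) by blast
  obtain S where S: "S \<subseteq> {..<length M}" "e = F2comb M S"
    using assms(1) e(1) unfolding generates_def by blast
  then have "F2char r s e = (\<Prod>i\<in>S. F2char r s (M ! i))"
    using F2char_F2comb finite_subset[OF S(1)] by blast
  also have "\<dots> = 1"
    using S(1) pos by (intro prod.neutral) auto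
  finally show False using e(2) by simp
qed

section \<open>Laplacians with integer edge weights\<close>

text \<open>The Laplacian of the Cayley graph of \<open>F\<^sub>2\<^sup>r\<close> in which the generator \<open>v\<close> has multiplicity
  \<open>m v\<close>; a loop \<open>m F2zero\<close> contributes nothing.\<close>

definition weighted_laplacian ::
    "nat \<Rightarrow> ((nat \<Rightarrow> bool) \<Rightarrow> int) \<Rightarrow> ((nat \<Rightarrow> bool) \<Rightarrow> int) \<Rightarrow> (nat \<Rightarrow> bool) \<Rightarrow> int" where
  "weighted_laplacian r m f u = (\<Sum>w\<in>F2vecs r. m (F2add u w) * (f u - f w))"

definition count_weight :: "(nat \<Rightarrow> bool) list \<Rightarrow> (nat \<Rightarrow> bool) \<Rightarrow> int" where
  "count_weight M v = int (count_list M v)"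

lemma weighted_laplacian_altdef:
  assumes "u \<in> F2vecs r"
  shows "weighted_laplacian r m f u
    = (\<Sum>v\<in>F2vecs r. m v) * f u - (\<Sum>w\<in>F2vecs r. m (F2add u w) * f w)"
proof -
  have "(\<Sum>w\<in>F2vecs r. m (F2add u w) * f u) = (\<Sum>v\<in>F2vecs r. m v) * f u"
    by (simp add: sum_distrib_right[symmetric] sum_F2vecs_translate[OF assms, of m])
  then show ?thesis
    by (simp add: weighted_laplacian_def right_diff_distrib sum_subtractf)
qed

lemma weighted_laplacian_add_weight:
  "weighted_laplacian r (\<lambda>v. m v + m' v) f u = weighted_laplacian r m f u + weighted_laplacian r m' f u"
  by (simp add: weighted_laplacian_def distrib_right sum.distrib)

lemma weighted_laplacian_const_weight:
  "weighted_laplacian r (\<lambda>_. c) f u = c * (int (card (F2vecs r)) * f u - (\<Sum>w\<in>F2vecs r. f w))"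
  by (simp add: weighted_laplacian_def sum_subtractf sum_distrib_left right_diff_distrib)

lemma weighted_laplacian_weight_cong:
  assumes "\<forall>v\<in>F2vecs r - {F2zero}. m v = m' v" "u \<in> F2vecs r"
  shows "weighted_laplacian r m f u = weighted_laplacian r m' f u"
  unfolding weighted_laplacian_def
  by (rule sum.cong) (use assms in \<open>auto simp: F2add_eq_zero_iff\<close>)

lemma weighted_laplacian_cong:
  assumes "\<forall>w\<in>F2vecs r. f w = g w" "u \<in> F2vecs r"
  shows "weighted_laplacian r m f u = weighted_laplacian r m g u"
  using assms by (simp add: weighted_laplacian_def)

lemma weighted_laplacian_add_scaled:
  "weighted_laplacian r m (\<lambda>u. f u + d * g u) u
    = weighted_laplacian r m f u + d * weighted_laplacian r m g u"
  unfolding weighted_laplacian_def sum_distrib_left sum.distrib[symmetric]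
  by (rule sum.cong) (simp_all add: algebra_simps)

lemma weighted_laplacian_sum:
  "weighted_laplacian r m (\<lambda>u. \<Sum>s\<in>S. a s * g s u) u = (\<Sum>s\<in>S. a s * weighted_laplacian r m (g s) u)"
  by (simp add: weighted_laplacian_def sum_distrib_left sum_subtractf[symmetric]
      right_diff_distrib mult_ac sum.swap[of _ S])

lemma sum_weighted_laplacian: "(\<Sum>u\<in>F2vecs r. weighted_laplacian r m f u) = 0"
proof -
  have "(\<Sum>u\<in>F2vecs r. \<Sum>w\<in>F2vecs r. m (F2add u w) * f w)
      = (\<Sum>u\<in>F2vecs r. \<Sum>w\<in>F2vecs r. m (F2add u w) * f u)"
    by (subst sum.swap) (simp add: F2add_commute)
  then show ?thesis
    by (simp add: weighted_laplacian_def right_diff_distrib sum_subtractf)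
qed

definition laplacian_eigenvalue :: "nat \<Rightarrow> ((nat \<Rightarrow> bool) \<Rightarrow> int) \<Rightarrow> (nat \<Rightarrow> bool) \<Rightarrow> int" where
  "laplacian_eigenvalue r m s = (\<Sum>v\<in>F2vecs r. m v * (1 - F2char r s v))"

lemma weighted_laplacian_F2char:
  assumes "u \<in> F2vecs r"
  shows "weighted_laplacian r m (F2char r s) u = laplacian_eigenvalue r m s * F2char r s u"
proof -
  have "weighted_laplacian r m (F2char r s) u
      = (\<Sum>v\<in>F2vecs r. m v * (F2char r s u - F2char r s (F2add u v)))"
    unfolding weighted_laplacian_def
    using sum_F2vecs_translate[OF assms, of "\<lambda>w. m (F2add u w) * (F2char r s u - F2char r s w)"]
    by simp
  also have "\<dots> = laplacian_eigenvalue r m s * F2char r s u"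
    unfolding laplacian_eigenvalue_def sum_distrib_right
    by (rule sum.cong) (simp_all add: F2char_F2add algebra_simps)
  finally show ?thesis .
qed

lemma laplacian_eigenvalue_pos:
  assumes "\<forall>v\<in>F2vecs r. m v \<ge> 0" "v \<in> F2vecs r" "m v > 0" "F2char r s v = -1"
  shows "laplacian_eigenvalue r m s > 0"
proof -
  have "0 < m v * (1 - F2char r s v)" using assms(3,4) by simp
  also have "\<dots> \<le> laplacian_eigenvalue r m s"
    unfolding laplacian_eigenvalue_def
  proof (rule member_le_sum)
    show "0 \<le> m w * (1 - F2char r s w)" if "w \<in> F2vecs r - {v}" for w
      using that assms(1) F2char_cases[of r s w] by auto
  qed (use assms(2) in auto)
  finally show ?thesis .
qed

lemma sum_count_weight:
  "set M \<subseteq> F2vecs r \<Longrightarrow> (\<Sum>v\<in>F2vecs r. count_weight M v) = int (length M)"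
  unfolding count_weight_def using sum_count_set[of M "F2vecs r"] by (simp flip: of_nat_sum)

lemma lap_apply_eq_weighted_laplacian:
  assumes "set M \<subseteq> F2vecs r - {F2zero}"
  shows "lap_apply r M x = (\<lambda>u. if u \<in> F2vecs r then weighted_laplacian r (count_weight M) x u else 0)"
proof (rule ext)
  fix u
  have cayley: "cayley_laplacian M u w
      = (if u = w then int (length M) else 0) - count_weight M (F2add u w)" for w
  proof -
    have "card {i. i < length M \<and> F2add u (M ! i) = w} = count_list M (F2add u w)"
      by (auto simp: count_list_eq_length_filter length_filter_conv_card fun_eq_iff F2add_def
          intro!: arg_cong[where f = card])
    moreover have "count_list M F2zero = 0"
      using assms by (subst count_list_0_iff) blast
    ultimately show ?thesis
      by (auto simp: cayley_laplacian_def count_weight_def)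
  qed
  show "lap_apply r M x u = (if u \<in> F2vecs r then weighted_laplacian r (count_weight M) x u else 0)"
  proof (cases "u \<in> F2vecs r")
    case True
    have "(\<Sum>w\<in>F2vecs r. cayley_laplacian M u w * x w)
        = (\<Sum>w\<in>F2vecs r. (if u = w then int (length M) * x w else 0) - count_weight M (F2add u w) * x w)"
      by (rule sum.cong) (simp_all add: cayley left_diff_distrib)
    also have "\<dots> = int (length M) * x u - (\<Sum>w\<in>F2vecs r. count_weight M (F2add u w) * x w)"
      using True by (simp add: sum_subtractf sum.delta)
    finally show ?thesis
      using True assms by (simp add: lap_apply_def weighted_laplacian_altdef sum_count_weight subset_iff)
  qed (simp add: lap_apply_def)
qed

section \<open>The torsion preimage\<close>

definition zero_sum_vecs :: "nat \<Rightarrow> ((nat \<Rightarrow> bool) \<Rightarrow> int) set" where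
  "zero_sum_vecs r = {x \<in> int_vecs r. (\<Sum>u\<in>F2vecs r. x u) = 0}"

lemma zero_sum_vecs_add:
  "t \<in> zero_sum_vecs r \<Longrightarrow> t' \<in> zero_sum_vecs r \<Longrightarrow> (\<lambda>u. t u + t' u) \<in> zero_sum_vecs r"
  by (simp add: zero_sum_vecs_def int_vecs_def sum.distrib)

lemma lap_image_subset_zero_sum:
  assumes "set M \<subseteq> F2vecs r - {F2zero}"
  shows "lap_image r M \<subseteq> zero_sum_vecs r"
  using sum_weighted_laplacian[of r "count_weight M"]
  by (auto simp: lap_image_def zero_sum_vecs_def int_vecs_def lap_apply_eq_weighted_laplacian[OF assms])

text \<open>Expand \<open>x\<close> in characters: it has no trivial component, and every other character is an
  eigenvector with positive eigenvalue; clearing these denominators by their product \<open>Q\<close>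
  yields a preimage of \<open>Q N x\<close>.\<close>

lemma zero_sum_multiple_in_lap_image:
  assumes M: "set M \<subseteq> F2vecs r - {F2zero}"
    and nondegenerate: "\<forall>s\<in>F2vecs r - {F2zero}. \<exists>v\<in>set M. F2char r s v = -1"
    and x: "x \<in> zero_sum_vecs r"
  shows "\<exists>k>0. (\<lambda>u. k * x u) \<in> lap_image r M"
proof -
  define V0 where "V0 = F2vecs r - {F2zero}"
  define eig where "eig = laplacian_eigenvalue r (count_weight M)"
  have eig_pos: "eig s > 0" if s: "s \<in> V0" for s
  proof -
    obtain v where v: "v \<in> set M" "F2char r s v = -1"
      using nondegenerate s unfolding V0_def by blast
    have "v \<in> F2vecs r" using M v(1) by blast
    moreover have "count_list M v \<noteq> 0" using v(1) by (simp add: count_list_0_iff)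
    ultimately show ?thesis
      unfolding eig_def using v(2)
      by (intro laplacian_eigenvalue_pos[of _ _ v]) (simp_all add: count_weight_def)
  qed
  define Q where "Q = (\<Prod>s\<in>V0. eig s)"
  have "Q > 0" unfolding Q_def using eig_pos by (intro prod_pos) auto
  have Q_div: "Q div eig s * eig s = Q" if "s \<in> V0" for s
    unfolding Q_def using that by (simp add: V0_def dvd_prodI)
  define xh where "xh s = (\<Sum>w\<in>F2vecs r. x w * F2char r s w)" for s
  have "xh F2zero = 0" using x by (simp add: xh_def zero_sum_vecs_def)
  define a where "a s = xh s * (Q div eig s)" for s
  define y where "y u = (if u \<in> F2vecs r then \<Sum>s\<in>V0. a s * F2char r s u else 0)" for u
  have "lap_apply r M y = (\<lambda>u. (Q * int (card (F2vecs r))) * x u)"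
  proof
    fix u
    show "lap_apply r M y u = (Q * int (card (F2vecs r))) * x u"
    proof (cases "u \<in> F2vecs r")
      case True
      have "weighted_laplacian r (count_weight M) y u
          = weighted_laplacian r (count_weight M) (\<lambda>u. \<Sum>s\<in>V0. a s * F2char r s u) u"
        using True by (intro weighted_laplacian_cong) (simp_all add: y_def)
      also have "\<dots> = (\<Sum>s\<in>V0. a s * (eig s * F2char r s u))"
        by (simp add: weighted_laplacian_sum weighted_laplacian_F2char[OF True] eig_def)
      also have "\<dots> = Q * (\<Sum>s\<in>V0. xh s * F2char r s u)"
        unfolding sum_distrib_left
      proof (rule sum.cong)
        fix s assume "s \<in> V0"
        have "a s * (eig s * F2char r s u) = xh s * (Q div eig s * eig s) * F2char r s u"
          by (simp only: a_def mult_ac)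
        also have "\<dots> = Q * (xh s * F2char r s u)"
          by (subst Q_div[OF \<open>s \<in> V0\<close>]) (simp only: mult_ac)
        finally show "a s * (eig s * F2char r s u) = Q * (xh s * F2char r s u)" .
      qed simp
      also have "(\<Sum>s\<in>V0. xh s * F2char r s u) = (\<Sum>s\<in>F2vecs r. xh s * F2char r s u)"
        unfolding V0_def using \<open>xh F2zero = 0\<close> by (subst (2) sum.remove[of _ F2zero]) auto
      also have "\<dots> = int (card (F2vecs r)) * x u"
        unfolding xh_def by (rule F2char_inversion[OF True])
      finally show ?thesis
        using True by (simp add: lap_apply_eq_weighted_laplacian[OF M])
    qed (use x in \<open>simp add: lap_apply_eq_weighted_laplacian[OF M] zero_sum_vecs_def int_vecs_def\<close>)
  qed
  moreover have "y \<in> int_vecs r" by (simp add: y_def int_vecs_def)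
  moreover have "F2vecs r \<noteq> {}"
    using F2zero_in_F2vecs by blast
  then have "Q * int (card (F2vecs r)) > 0"
    using \<open>Q > 0\<close> by (simp add: card_gt_0_iff)
  ultimately show ?thesis
    unfolding lap_image_def by (metis image_eqI)
qed

lemma torsion_preimage_eq_zero_sum:
  assumes M: "set M \<subseteq> F2vecs r - {F2zero}"
    and nondegenerate: "\<forall>s\<in>F2vecs r - {F2zero}. \<exists>v\<in>set M. F2char r s v = -1"
  shows "torsion_preimage r M = zero_sum_vecs r"
proof
  show "torsion_preimage r M \<subseteq> zero_sum_vecs r"
  proof
    fix x assume "x \<in> torsion_preimage r M"
    then obtain k where x: "x \<in> int_vecs r" and "k > 0" and "(\<lambda>u. k * x u) \<in> zero_sum_vecs r"
      unfolding torsion_preimage_def using lap_image_subset_zero_sum[OF M] by blast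
    then show "x \<in> zero_sum_vecs r"
      by (simp add: zero_sum_vecs_def sum_distrib_left[symmetric])
  qed
  show "zero_sum_vecs r \<subseteq> torsion_preimage r M"
    using zero_sum_multiple_in_lap_image[OF M nondegenerate]
    by (auto simp: torsion_preimage_def zero_sum_vecs_def)
qed

section \<open>Parity\<close>

lemma odd_translate_sums_Suc_Un:
  assumes "K \<subseteq> F2vecs r"
    and "\<forall>u\<in>F2vecs r. odd (\<Sum>k\<in>K. c (F2add u k) + c ((F2add u k)(r := True)))"
  shows "\<forall>u\<in>F2vecs (Suc r). odd (\<Sum>w\<in>K \<union> (\<lambda>w. w(r := True)) ` K. c (F2add u w))"
  unfolding ball_F2vecs_Suc sum_Un_image_upd[OF assms(1)]
  using assms by (auto simp: subset_iff F2add_upd add.commute cong: sum.cong)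

lemma odd_translate_sums_Suc:
  assumes "K \<subseteq> F2vecs r"
    and "\<forall>u\<in>F2vecs r. odd (\<Sum>k\<in>K. c ((F2add u k)(r := True)))"
    and "\<forall>w\<in>F2vecs r. even (c w + c (w(r := True)))"
  shows "\<forall>u\<in>F2vecs (Suc r). odd (\<Sum>k\<in>K. c (F2add u k))"
proof -
  have "odd (\<Sum>k\<in>K. c (F2add u k))" if "u \<in> F2vecs r" for u
  proof -
    have "even (\<Sum>k\<in>K. c (F2add u k) + c ((F2add u k)(r := True)))"
      using assms(1,3) that by (intro dvd_sum) auto
    then show ?thesis using assms(2) that by (simp add: sum.distrib)
  qed
  then show ?thesis
    using assms(1,2) by (auto simp: ball_F2vecs_Suc subset_iff F2add_upd cong: sum.cong)
qed

text \<open>Modulo 2: every nonzero element of the group algebra \<open>F\<^sub>2[F\<^sub>2\<^sup>r]\<close> divides the sum of all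
  group elements.\<close>

lemma exists_odd_translate_sums:
  fixes c :: "(nat \<Rightarrow> bool) \<Rightarrow> int"
  assumes "\<exists>v\<in>F2vecs r. odd (c v)"
  shows "\<exists>Y\<subseteq>F2vecs r. \<forall>u\<in>F2vecs r. odd (\<Sum>w\<in>Y. c (F2add u w))"
  using assms
proof (induction r arbitrary: c)
  case 0
  then show ?case by (intro exI[of _ "{F2zero}"]) (simp add: F2vecs_0)
next
  case (Suc r)
  let ?up = "\<lambda>w. w(r := True)"
  show ?case
  proof (cases "\<exists>w\<in>F2vecs r. odd (c w + c (?up w))")
    case True
    then obtain K where "K \<subseteq> F2vecs r"
      "\<forall>u\<in>F2vecs r. odd (\<Sum>k\<in>K. c (F2add u k) + c (?up (F2add u k)))"
      using Suc.IH[of "\<lambda>w. c w + c (?up w)"] by blast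
    then show ?thesis
      using odd_translate_sums_Suc_Un[of K r c] by (intro exI[of _ "K \<union> ?up ` K"]) (auto simp: F2vecs_Suc)
  next
    case False
    obtain v where v: "v \<in> F2vecs (Suc r)" "odd (c v)" using Suc.prems by blast
    have "\<exists>w\<in>F2vecs r. odd (c (?up w))"
    proof (cases "v \<in> F2vecs r")
      case True
      then have "even (c v + c (?up v))" using False by blast
      then show ?thesis using True v(2) by auto
    qed (use v F2vecs_Suc in auto)
    then obtain K where "K \<subseteq> F2vecs r" "\<forall>u\<in>F2vecs r. odd (\<Sum>k\<in>K. c (?up (F2add u k)))"
      using Suc.IH[of "\<lambda>w. c (?up w)"] by blast
    then show ?thesis
      using odd_translate_sums_Suc[of K r c] False by (intro exI[of _ K]) (auto simp: F2vecs_Suc)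
  qed
qed

lemma exists_weighted_laplacian_odd:
  assumes "\<exists>w\<in>F2vecs r - {F2zero}. odd (m w)"
  shows "\<exists>P\<in>int_vecs r. \<forall>u\<in>F2vecs r. odd (weighted_laplacian r m P u)"
proof -
  \<comment> \<open>modulo 2, \<open>weighted_laplacian r m f\<close> is the convolution of \<open>f\<close> with \<open>c\<close>\<close>
  define c where "c v = m v + (if v = F2zero then (\<Sum>v\<in>F2vecs r. m v) else 0)" for v
  obtain w where w: "w \<in> F2vecs r" "w \<noteq> F2zero" "odd (m w)"
    using assms by blast
  then have "odd (c w)" by (simp add: c_def)
  then obtain Y where Y: "Y \<subseteq> F2vecs r" "\<forall>u\<in>F2vecs r. odd (\<Sum>w\<in>Y. c (F2add u w))"
    using exists_odd_translate_sums[of r c] w(1) by blast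
  define P where "P u = (if u \<in> Y then 1 else 0 :: int)" for u
  have "weighted_laplacian r m P u = (\<Sum>w\<in>Y. c (F2add u w)) - 2 * (\<Sum>w\<in>Y. m (F2add u w))"
    if u: "u \<in> F2vecs r" for u
  proof -
    have "finite Y" using Y(1) by (rule finite_subset) simp
    have "(\<Sum>w\<in>F2vecs r. m (F2add u w) * P w) = (\<Sum>w\<in>Y. m (F2add u w))"
      using Y(1) by (simp add: P_def if_distrib sum.If_cases Int_absorb1 cong: if_cong)
    moreover have "(\<Sum>w\<in>Y. c (F2add u w)) = (\<Sum>w\<in>Y. m (F2add u w)) + (\<Sum>v\<in>F2vecs r. m v) * P u"
      using \<open>finite Y\<close> by (simp add: c_def sum.distrib F2add_eq_zero_iff eq_commute[of u] P_def)
    ultimately show ?thesis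
      using u by (simp add: weighted_laplacian_altdef)
  qed
  moreover have "P \<in> int_vecs r" using Y(1) by (auto simp: P_def int_vecs_def)
  ultimately show ?thesis
    using Y(2) by (intro bexI[of _ P]) simp_all
qed

section \<open>Comparison of the quotients\<close>

definition twice_plus :: "('a \<Rightarrow> int) set \<Rightarrow> ('a \<Rightarrow> int) set \<Rightarrow> ('a \<Rightarrow> int) set" where
  "twice_plus T L = {\<lambda>u. 2 * t u + l u | t l. t \<in> T \<and> l \<in> L}"

text \<open>If the weights of \<open>A\<close> exceed those of \<open>B\<close> by \<open>c\<close>, then \<open>L\<^sub>A y = L\<^sub>B y + c (N y - s \<one>)\<close> with
  \<open>s = \<Sum>y\<close>. As \<open>N y\<close> is even and \<open>\<one> \<equiv> L\<^sub>B P\<close> mod 2, the difference \<open>L\<^sub>A y - L\<^sub>B (y - c s P)\<close> is even.\<close>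

lemma lap_image_subset_twice_plus:
  assumes A: "set A \<subseteq> F2vecs r - {F2zero}" and B: "set B \<subseteq> F2vecs r - {F2zero}"
    and weights: "\<forall>v\<in>F2vecs r - {F2zero}. count_weight A v = count_weight B v + c"
    and even_card: "even (card (F2vecs r))"
    and P: "P \<in> int_vecs r" "\<forall>u\<in>F2vecs r. odd (weighted_laplacian r (count_weight B) P u)"
  shows "lap_image r A \<subseteq> twice_plus (zero_sum_vecs r) (lap_image r B)"
proof
  fix l assume "l \<in> lap_image r A"
  then obtain y where y: "y \<in> int_vecs r" and l: "l = lap_apply r A y"
    by (auto simp: lap_image_def)
  define s where "s = (\<Sum>w\<in>F2vecs r. y w)"
  define y' where "y' = (\<lambda>u. y u + (- c * s) * P u)"
  define l' where "l' = lap_apply r B y'"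
  define z where "z u = (l u - l' u) div 2" for u
  have "even (l u - l' u)" for u
  proof (cases "u \<in> F2vecs r")
    case True
    let ?LB = "weighted_laplacian r (count_weight B)"
    have "l u = weighted_laplacian r (\<lambda>v. count_weight B v + c) y u"
      using True weights by (simp add: l lap_apply_eq_weighted_laplacian[OF A] weighted_laplacian_weight_cong)
    also have "\<dots> = ?LB y u + c * (int (card (F2vecs r)) * y u - s)"
      by (simp add: weighted_laplacian_add_weight weighted_laplacian_const_weight s_def)
    finally have l_u: "l u = ?LB y u + c * (int (card (F2vecs r)) * y u - s)" .
    have l'_u: "l' u = ?LB y u + (- c * s) * ?LB P u"
      unfolding l'_def y'_def lap_apply_eq_weighted_laplacian[OF B] weighted_laplacian_add_scaled
      using True by simp
    from l_u l'_u have "l u - l' u = c * int (card (F2vecs r)) * y u + c * s * (?LB P u - 1)"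
      by (simp add: algebra_simps)
    then show ?thesis
      using even_card P(2) True by simp
  qed (simp add: l l'_def lap_apply_def)
  then have l_eq: "l = (\<lambda>u. 2 * z u + l' u)"
    by (simp add: z_def fun_eq_iff)
  have "y' \<in> int_vecs r" using y P(1) by (simp add: y'_def int_vecs_def)
  then have "l' \<in> lap_image r B" by (simp add: l'_def lap_image_def)
  moreover have "z \<in> zero_sum_vecs r"
  proof -
    have "(\<lambda>u. 2 * z u + l' u) \<in> zero_sum_vecs r" "l' \<in> zero_sum_vecs r"
      using \<open>l \<in> lap_image r A\<close> \<open>l' \<in> lap_image r B\<close> lap_image_subset_zero_sum A B
      unfolding l_eq by blast+
    then show ?thesis
      by (auto simp: zero_sum_vecs_def int_vecs_def sum.distrib sum_distrib_left[symmetric])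
  qed
  ultimately show "l \<in> twice_plus (zero_sum_vecs r) (lap_image r B)"
    unfolding twice_plus_def using l_eq by blast
qed

lemma twice_plus_subset:
  assumes "\<forall>t\<in>T. \<forall>t'\<in>T. (\<lambda>u. t u + t' u) \<in> T" "L \<subseteq> twice_plus T L'"
  shows "twice_plus T L \<subseteq> twice_plus T L'"
proof
  fix x assume "x \<in> twice_plus T L"
  then obtain t l where "t \<in> T" "l \<in> L" "x = (\<lambda>u. 2 * t u + l u)"
    by (auto simp: twice_plus_def)
  moreover obtain t' l' where "t' \<in> T" "l' \<in> L'" "l = (\<lambda>u. 2 * t' u + l' u)"
    using assms(2) \<open>l \<in> L\<close> by (auto simp: twice_plus_def)
  ultimately have "(\<lambda>u. t u + t' u) \<in> T" "x = (\<lambda>u. 2 * (t u + t' u) + l' u)"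
    using assms(1) by (auto simp: algebra_simps)
  then show "x \<in> twice_plus T L'"
    unfolding twice_plus_def using \<open>l' \<in> L'\<close>
    by (intro CollectI exI[of _ "\<lambda>u. t u + t' u"] exI[of _ l']) simp
qed

lemma sandpile_mod2_eqI:
  assumes "torsion_preimage r A = T" "torsion_preimage r B = T"
    and "\<forall>t\<in>T. \<forall>t'\<in>T. (\<lambda>u. t u + t' u) \<in> T"
    and "lap_image r A \<subseteq> twice_plus T (lap_image r B)"
    and "lap_image r B \<subseteq> twice_plus T (lap_image r A)"
  shows "sandpile_mod2 r A = sandpile_mod2 r B"
proof -
  have "twice_plus T (lap_image r A) = twice_plus T (lap_image r B)"
    using twice_plus_subset assms(3-5) by blast
  then have "(\<exists>t\<in>T. \<exists>l\<in>lap_image r A. x = (\<lambda>u. 2 * t u + l u))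
      \<longleftrightarrow> (\<exists>t\<in>T. \<exists>l\<in>lap_image r B. x = (\<lambda>u. 2 * t u + l u))" for x
    unfolding twice_plus_def by blast
  then show ?thesis
    unfolding sandpile_mod2_def assms(1,2) by simp
qed

theorem mainTheorem5:
  fixes r :: nat and M M' :: "(nat \<Rightarrow> bool) list"
  assumes "r \<ge> 1"
    and "set M \<subseteq> F2vecs r - {F2zero}"
    and "generates r M"
    and "\<exists>u \<in> F2vecs r - {F2zero}. \<exists>w \<in> F2vecs r - {F2zero}.
           even (count_list M u) \<and> odd (count_list M w)"
    and "set M' \<subseteq> F2vecs r - {F2zero}"
    and "\<forall>u \<in> F2vecs r - {F2zero}. count_list M' u = count_list M u + 1"
  shows "d_inv r M = d_inv r M'"
proof -
  note M = assms(2) and M' = assms(5) and count_M' = assms(6)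
  have weights: "\<forall>v\<in>F2vecs r - {F2zero}. count_weight M' v = count_weight M v + 1"
    "\<forall>v\<in>F2vecs r - {F2zero}. count_weight M v = count_weight M' v + (- 1)"
    using count_M' by (simp_all add: count_weight_def)
  have "\<forall>s\<in>F2vecs r - {F2zero}. \<exists>v\<in>set M'. F2char r s v = -1"
    using exists_F2char_eq_neg count_M' by (fastforce simp: count_list_0_iff[symmetric])
  then have torsion: "torsion_preimage r M = zero_sum_vecs r" "torsion_preimage r M' = zero_sum_vecs r"
    using torsion_preimage_eq_zero_sum M M' generates_imp_F2char_neg[OF assms(3)] by blast+
  obtain u w where "u \<in> F2vecs r - {F2zero}" "even (count_list M u)"
    and "w \<in> F2vecs r - {F2zero}" "odd (count_list M w)"
    using assms(4) by blast
  then obtain P P' where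
    "P \<in> int_vecs r" "\<forall>u\<in>F2vecs r. odd (weighted_laplacian r (count_weight M) P u)"
    "P' \<in> int_vecs r" "\<forall>u\<in>F2vecs r. odd (weighted_laplacian r (count_weight M') P' u)"
    using exists_weighted_laplacian_odd count_M' by (metis count_weight_def even_of_nat odd_add odd_one)
  then have "sandpile_mod2 r M = sandpile_mod2 r M'"
    using sandpile_mod2_eqI[OF torsion] zero_sum_vecs_add even_card_F2vecs[OF assms(1)]
      lap_image_subset_twice_plus[OF M M' weights(2)] lap_image_subset_twice_plus[OF M' M weights(1)]
    by blast
  then show ?thesis
    unfolding d_inv_def by simp
qed

end
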